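(* Let $\rho>0$, $z=\{z_0,\dots,z_n\}$ with pairwise distinct coordinates, $\alpha=\min_{i\ne j}|z_i-z_j|$, $k\in\{1,\dots,n\}$ and $\pi\in\mathcal{P}^k_z$. Fix $N\in\mathbb{N}\setminus\{0\}$. For every path $p\in G(k+2N,\pi_0\to\pi)$ there exists a path $\hat p\in G(k,\pi_0\to\pi)$ such that $$\frac{P_0(p)}{P_0(\hat p)}\le\left(\frac{(1+\frac{\gamma_1}{\rho\alpha})^k}{\alpha\rho}\right)^N.$$
   Context: $\mathcal{P}_z$ is the set of partitions of $z$; $\mathcal{P}^r_z$ is the set of partitions with $n+1-r$ blocks; $\pi_0$ is the partition into singletons. The ARG $\Gamma^{\rho,z}$ is the Markov chain on $\mathcal{P}_z$ in which each pair of blocks merges at rate $1$ and each block $\{z_{i_1}<\dots<z_{i_k}\}$ splits into $\{z_{i_1},\dots,z_{i_j}\}$ and $\{z_{i_{j+1}},\dots,z_{i_k}\}$ at rate $\rho(z_{i_{j+1}}-z_{i_j})$. Let $\theta(\pi',\pi'')$ be the transition rate from $\pi'$ to $\pi''$ of this chain with $\rho=1$. For $j\ge1$, $G(j,\pi'\to\pi'')$ is the set of sequences $(\pi^{(0)}=\pi',\pi^{(1)},\dots,\pi^{(j)}=\pi'')$ with $\pi^{(1)},\dots,\pi^{(j-1)}\in\mathcal{P}_z\setminus\{\pi',\pi''\}$ and $\theta(\pi^{(i)},\pi^{(i+1)})>0$ for all $0\le i\le j-1$. $P_0$ is the law of the embedded jump chain of $\Gamma^{\rho,z}$ started at $\pi_0$,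 and $P_0(p)$ is the probability that its first steps follow the path $p$. $\gamma_r=\frac{(n-r)(n-r+1)}{2}$ is the total coalescence rate from a partition of order $r$. *)

theory Defs
  imports Complex_Main "HOL-Library.Disjoint_Sets"
begin

text \<open>The sampling points z = {z_0,...,z_n} are modelled as a finite set Z of reals.\<close>

definition partitions :: "real set \<Rightarrow> real set set set" where
  "partitions Z = {P. partition_on Z P}"

definition pi0 :: "real set \<Rightarrow> real set set" where
  "pi0 Z = {{x} | x. x \<in> Z}"

definition partitions_order :: "real set \<Rightarrow> nat \<Rightarrow> real set set set" where
  "partitions_order Z r = {P \<in> partitions Z. card P = card Z - r}"

text \<open>Rate contributed by coalescence events (each pair of blocks merges at rate 1).\<close>
definition merge_rate :: "real set set \<Rightarrow> real set set \<Rightarrow> real" where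
  "merge_rate P P' = real (card {{B1, B2} | B1 B2. B1 \<in> P \<and> B2 \<in> P \<and> B1 \<noteq> B2 \<and>
       P' = insert (B1 \<union> B2) (P - {B1, B2})})"

definition split_rate :: "real \<Rightarrow> real set set \<Rightarrow> real set set \<Rightarrow> real" where
  "split_rate \<rho> P P' = (\<Sum>(B, a) \<in> {(B, a). B \<in> P \<and> a \<in> B \<and> a < Max B \<and>
       P' = insert {x \<in> B. x \<le> a} (insert {x \<in> B. a < x} (P - {B}))}.
       \<rho> * (Min {x \<in> B. a < x} - a))"

definition arg_rate :: "real \<Rightarrow> real set set \<Rightarrow> real set set \<Rightarrow> real" where
  "arg_rate \<rho> P P' = merge_rate P P' + split_rate \<rho> P P'"

definition theta :: "real set set \<Rightarrow> real set set \<Rightarrow> real" where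
  "theta P P' = arg_rate 1 P P'"

definition total_rate :: "real \<Rightarrow> real set \<Rightarrow> real set set \<Rightarrow> real" where
  "total_rate \<rho> Z P = (\<Sum>P' \<in> partitions Z. arg_rate \<rho> P P')"

definition jump_prob :: "real \<Rightarrow> real set \<Rightarrow> real set set \<Rightarrow> real set set \<Rightarrow> real" where
  "jump_prob \<rho> Z P P' = arg_rate \<rho> P P' / total_rate \<rho> Z P"

text \<open>G(j, P1 -> P2): paths as lists (pi^(0),...,pi^(j)).\<close>
definition paths :: "real set \<Rightarrow> nat \<Rightarrow> real set set \<Rightarrow> real set set \<Rightarrow> real set set list set" where
  "paths Z j P1 P2 = {ps. length ps = j + 1 \<and> ps ! 0 = P1 \<and> ps ! j = P2 \<and>
      (\<forall>i \<in> {1..<j}. ps ! i \<in> partitions Z - {P1, P2}) \<and>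
      (\<forall>i < j. theta (ps ! i) (ps ! (i + 1)) > 0)}"

text \<open>P_0(p): probability that the embedded jump chain started at pi_0 follows p.\<close>
definition path_prob :: "real \<Rightarrow> real set \<Rightarrow> real set set list \<Rightarrow> real" where
  "path_prob \<rho> Z ps = (if ps \<noteq> [] \<and> hd ps = pi0 Z
      then (\<Prod>i < length ps - 1. jump_prob \<rho> Z (ps ! i) (ps ! (i + 1))) else 0)"

definition min_dist :: "real set \<Rightarrow> real" where
  "min_dist Z = Min {\<bar>x - y\<bar> | x y. x \<in> Z \<and> y \<in> Z \<and> x \<noteq> y}"

definition gamma :: "real set \<Rightarrow> nat \<Rightarrow> real" where
  "gamma Z r = (let n = card Z - 1 in real ((n - r) * (n - r + 1)) / 2)"

end

theory Submission
  imports Defs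
begin

text \<open>
  A gap of a partition Q is a block B together with a point a of B other than its maximum; its
  length is the distance from a to the next point of B. The gaps are exactly the possible splits
  of Q, a split has rate \<rho> times the length of its gap, and Q has card Z - card Q gaps. Hence Q
  is left at total rate T(Q) = (card Q choose 2) + \<rho> S(Q), where S(Q) is the total gap length,
  while every single merge has rate 1.

  Let \<sigma>_j(Q) be the least total length of j gaps of Q and \<Phi>(Q) = \<sigma>_1(Q) \<dots> \<sigma>_(l-1)(Q) when Q
  has l gaps. A merge adds a gap and shortens none, so it multiplies \<Phi> by at most \<sigma>_l(Q) = S(Q),
  while its jump probability is 1/T(Q) \<le> 1/(\<rho> S(Q)). A split removes a gap, so it divides \<Phi>
  by at least \<sigma>_1(Q) \<ge> \<alpha>, and its jump probability is at most 1. Therefore, along any path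
  from \<pi>_0, the probability of the prefix times \<rho>^(merges - 1) \<alpha>^splits \<Phi>(current state) never
  exceeds 1/T(\<pi>_0); a path of length k + 2N ending in a partition of order k makes k + N merges
  and N splits.

  Conversely, undoing again and again the merge that closed the longest gap of \<pi> yields a path of
  k merges whose j-th state has S \<le> \<sigma>_j(\<pi>). Since T \<le> \<beta> \<rho> S with \<beta> = 1 + \<gamma>_1/(\<rho> \<alpha>), this
  path has probability at least 1/(T(\<pi>_0) (\<beta> \<rho>)^(k-1) \<Phi>(\<pi>)), and dividing the two bounds
  gives the claim.
\<close>

definition gaps :: "real set set \<Rightarrow> (real set \<times> real) set" where
  "gaps Q = {(B, a). B \<in> Q \<and> a \<in> B \<and> a < Max B}"

definition gap_length :: "real set \<times> real \<Rightarrow> real" where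
  "gap_length x = Min {y \<in> fst x. snd x < y} - snd x"

definition total_gap :: "real set set \<Rightarrow> real" where
  "total_gap Q = (\<Sum>x\<in>gaps Q. gap_length x)"

definition least_gap_sum :: "real set set \<Rightarrow> nat \<Rightarrow> real" where
  "least_gap_sum Q j = Min ((\<lambda>J. \<Sum>x\<in>J. gap_length x) ` {J. J \<subseteq> gaps Q \<and> card J = j})"

definition gap_potential :: "real set set \<Rightarrow> real" where
  "gap_potential Q = (\<Prod>j\<in>{1..<card (gaps Q)}. least_gap_sum Q j)"

definition split_block :: "real set set \<Rightarrow> real set \<Rightarrow> real \<Rightarrow> real set set" where
  "split_block Q B a = insert {x \<in> B. x \<le> a} (insert {x \<in> B. a < x} (Q - {B}))"

definition merge_blocks :: "real set set \<Rightarrow> real set \<Rightarrow> real set \<Rightarrow> real set set" where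
  "merge_blocks Q B1 B2 = insert (B1 \<union> B2) (Q - {B1, B2})"

definition merge_step :: "real set set \<Rightarrow> real set set \<Rightarrow> bool" where
  "merge_step Q Q' \<longleftrightarrow> (\<exists>B1\<in>Q. \<exists>B2\<in>Q. B1 \<noteq> B2 \<and> Q' = merge_blocks Q B1 B2)"

definition merge_gap :: "real set \<Rightarrow> real set \<Rightarrow> real set \<times> real \<Rightarrow> real set \<times> real" where
  "merge_gap B1 B2 x = (if fst x = B1 \<or> fst x = B2 then (B1 \<union> B2, snd x) else x)"

definition split_gap :: "real set \<Rightarrow> real \<Rightarrow> real set \<times> real \<Rightarrow> real set \<times> real" where
  "split_gap B a x =
    (if fst x \<noteq> B then x
     else if snd x \<le> a then ({y \<in> B. y \<le> a}, snd x) else ({y \<in> B. a < y}, snd x))"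

definition merge_chain :: "real set \<Rightarrow> real set set list \<Rightarrow> bool" where
  "merge_chain Z R \<longleftrightarrow>
    R \<noteq> [] \<and> R ! 0 = pi0 Z \<and> (\<forall>j. Suc j < length R \<longrightarrow> merge_step (R ! j) (R ! Suc j))"

lemma partition_on_replace_blocks:
  assumes Q: "partition_on X Q" and A: "A \<subseteq> Q" and C: "partition_on (\<Union>A) C"
  shows "partition_on X (C \<union> (Q - A))"
proof (rule partition_onI)
  have "\<Union>C = \<Union>A" using partition_onD1[OF C] ..
  then show "\<Union>(C \<union> (Q - A)) = X"
    using partition_onD1[OF Q] A by blast
  show "{} \<notin> C \<union> (Q - A)"
    using partition_onD3[OF Q] partition_onD3[OF C] by auto
  have disj: "disjnt c q" if "c \<in> C" "q \<in> Q - A" for c q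
  proof -
    have "c \<subseteq> \<Union>A" using partition_onD1[OF C] that(1) by auto
    moreover have "disjnt a q" if "a \<in> A" for a
      using partition_onD2[OF Q] A that \<open>q \<in> Q - A\<close> by (auto simp: pairwise_def)
    ultimately show ?thesis by (auto simp: disjnt_def)
  qed
  fix p q assume pq: "p \<in> C \<union> (Q - A)" "q \<in> C \<union> (Q - A)" "p \<noteq> q"
  consider "p \<in> C" "q \<in> C" | "p \<in> C" "q \<in> Q - A" | "p \<in> Q - A" "q \<in> C" | "p \<in> Q" "q \<in> Q"
    using pq(1,2) by blast
  then show "disjnt p q"
  proof cases
    case 1 then show ?thesis using partition_onD2[OF C] pq(3) by (simp add: pairwise_def)
  next
    case 2 then show ?thesis using disj by blast
  next
    case 3 then show ?thesis using disj disjnt_sym by blast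
  next
    case 4 then show ?thesis using partition_onD2[OF Q] pq(3) by (simp add: pairwise_def)
  qed
qed

lemma partition_on_block_eq:
  assumes "partition_on X Q" "B1 \<in> Q" "B2 \<in> Q" "x \<in> B1" "x \<in> B2"
  shows "B1 = B2"
  using partition_onD2[OF assms(1)] assms(2-) by (auto simp: pairwise_def disjnt_def)

lemma partition_on_union_notin:
  assumes "partition_on X Q" "B1 \<in> Q" "B2 \<in> Q" "B1 \<noteq> B2"
  shows "B1 \<union> B2 \<notin> Q"
proof
  assume "B1 \<union> B2 \<in> Q"
  moreover obtain x1 x2 where "x1 \<in> B1" "x2 \<in> B2"
    using partition_onD3[OF assms(1)] assms(2,3) by (metis all_not_in_conv)
  ultimately show False
    using partition_on_block_eq[OF assms(1)] assms(2-4) by (metis UnI1 UnI2)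
qed

lemma gaps_iff: "(B, a) \<in> gaps Q \<longleftrightarrow> B \<in> Q \<and> a \<in> B \<and> a < Max B"
  unfolding gaps_def by simp

lemma pi0_eq_image: "pi0 Z = (\<lambda>x. {x}) ` Z"
  unfolding pi0_def by auto

lemma pi0_partition: "partition_on Z (pi0 Z)"
  unfolding pi0_eq_image by (rule partition_on_singletons)

lemma card_pi0: "card (pi0 Z) = card Z"
  unfolding pi0_eq_image by (simp add: card_image)

lemma gaps_pi0: "gaps (pi0 Z) = {}"
  unfolding gaps_def pi0_def by auto

lemma split_rate_eq:
  "split_rate \<rho> Q Q' =
    (\<Sum>x\<in>{x \<in> gaps Q. split_block Q (fst x) (snd x) = Q'}. \<rho> * gap_length x)"
proof -
  have "{(B, a). B \<in> Q \<and> a \<in> B \<and> a < Max B \<and>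
          Q' = insert {x \<in> B. x \<le> a} (insert {x \<in> B. a < x} (Q - {B}))}
      = {x \<in> gaps Q. split_block Q (fst x) (snd x) = Q'}"
  proof (rule set_eqI)
    fix x :: "real set \<times> real"
    obtain B a where x: "x = (B, a)" by (cases x)
    show "x \<in> {(B, a). B \<in> Q \<and> a \<in> B \<and> a < Max B \<and>
          Q' = insert {x \<in> B. x \<le> a} (insert {x \<in> B. a < x} (Q - {B}))}
      \<longleftrightarrow> x \<in> {x \<in> gaps Q. split_block Q (fst x) (snd x) = Q'}"
      unfolding x gaps_def split_block_def
      by (simp only: mem_Collect_eq case_prod_conv fst_conv snd_conv eq_commute[of Q'] conj_assoc)
  qed
  then show ?thesis
    unfolding split_rate_def by (auto simp: gap_length_def intro: sum.cong)
qed

lemma merge_rate_eq: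
  "merge_rate Q Q' = real (card {A. A \<subseteq> Q \<and> card A = 2 \<and> insert (\<Union>A) (Q - A) = Q'})"
proof -
  have "{{B1, B2} | B1 B2. B1 \<in> Q \<and> B2 \<in> Q \<and> B1 \<noteq> B2 \<and> Q' = insert (B1 \<union> B2) (Q - {B1, B2})}
      = {A. A \<subseteq> Q \<and> card A = 2 \<and> insert (\<Union>A) (Q - A) = Q'}"
  proof (intro equalityI subsetI)
    fix A assume "A \<in> {{B1, B2} | B1 B2. B1 \<in> Q \<and> B2 \<in> Q \<and> B1 \<noteq> B2 \<and>
      Q' = insert (B1 \<union> B2) (Q - {B1, B2})}"
    then obtain B1 B2 where "A = {B1, B2}" "B1 \<in> Q" "B2 \<in> Q" "B1 \<noteq> B2"
      "Q' = insert (B1 \<union> B2) (Q - {B1, B2})" by blast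
    then show "A \<in> {A. A \<subseteq> Q \<and> card A = 2 \<and> insert (\<Union>A) (Q - A) = Q'}" by simp
  next
    fix A assume A: "A \<in> {A. A \<subseteq> Q \<and> card A = 2 \<and> insert (\<Union>A) (Q - A) = Q'}"
    then obtain B1 B2 where B: "A = {B1, B2}" "B1 \<noteq> B2" by (auto simp: card_2_iff)
    have "B1 \<in> Q" "B2 \<in> Q" using A B(1) by auto
    moreover have "Q' = insert (B1 \<union> B2) (Q - {B1, B2})" using A unfolding B(1) by simp
    ultimately show "A \<in> {{B1, B2} | B1 B2. B1 \<in> Q \<and> B2 \<in> Q \<and> B1 \<noteq> B2 \<and>
      Q' = insert (B1 \<union> B2) (Q - {B1, B2})}" using B by blast
  qed
  then show ?thesis unfolding merge_rate_def by simp
qed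

lemma theta_pos_cases:
  assumes "0 < theta Q Q'"
  shows "merge_step Q Q' \<or> (\<exists>B a. (B, a) \<in> gaps Q \<and> Q' = split_block Q B a)"
proof (cases "merge_rate Q Q' = 0")
  case False
  then have "{A. A \<subseteq> Q \<and> card A = 2 \<and> insert (\<Union>A) (Q - A) = Q'} \<noteq> {}"
    unfolding merge_rate_eq by (metis card.empty of_nat_0)
  then obtain A where A: "A \<subseteq> Q" "card A = 2" "insert (\<Union>A) (Q - A) = Q'" by blast
  then obtain B1 B2 where B: "A = {B1, B2}" "B1 \<noteq> B2" by (auto simp: card_2_iff)
  have "B1 \<in> Q" "B2 \<in> Q" using A(1) B(1) by auto
  moreover have "Q' = merge_blocks Q B1 B2" using A(3) unfolding B(1) merge_blocks_def by simp
  ultimately show ?thesis unfolding merge_step_def using B(2) by blast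
next
  case True
  then have "split_rate 1 Q Q' \<noteq> 0" using assms unfolding theta_def arg_rate_def by simp
  then have "{x \<in> gaps Q. split_block Q (fst x) (snd x) = Q'} \<noteq> {}"
    unfolding split_rate_eq by (metis sum.empty)
  then obtain x where "x \<in> gaps Q" "Q' = split_block Q (fst x) (snd x)" by blast
  then show ?thesis by (metis prod.collapse)
qed

lemma gamma_nonneg: "0 \<le> gamma Z r"
  by (simp add: gamma_def Let_def)

lemma choose_two_le_gamma:
  assumes "c \<le> card Z - 1"
  shows "real (c choose 2) \<le> gamma Z 1"
proof -
  define n where "n = card Z - 1"
  have "c * (c - 1) \<le> n * (n - 1)" using assms unfolding n_def by (intro mult_le_mono) auto
  then have "c choose 2 \<le> n * (n - 1) div 2" unfolding choose_two by (rule div_le_mono)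
  then have "2 * real (c choose 2) \<le> real (n * (n - 1))" by linarith
  moreover have "gamma Z 1 = real (n * (n - 1)) / 2"
    unfolding gamma_def Let_def n_def by (cases "card Z - 1") (auto simp: mult.commute)
  ultimately show ?thesis by simp
qed

lemma ratio_bound:
  fixes X Y T \<rho> \<alpha> \<Phi> \<beta> :: real and k N :: nat
  assumes T: "0 < T" and \<rho>: "0 < \<rho>" and \<alpha>: "0 < \<alpha>" and \<Phi>: "0 < \<Phi>" and \<beta>: "1 \<le> \<beta>"
    and k: "1 \<le> k" and N: "1 \<le> N"
    and upper: "X * \<rho> ^ (k + N - 1) * \<alpha> ^ N * \<Phi> \<le> 1 / T"
    and lower: "1 / (T * (\<beta> * \<rho>) ^ (k - 1) * \<Phi>) \<le> Y"
  shows "X / Y \<le> (\<beta> ^ k / (\<alpha> * \<rho>)) ^ N"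
proof (cases "0 \<le> X")
  case False
  have "0 < Y" using lower T \<beta> \<rho> \<Phi> by (smt (verit) divide_pos_pos mult_pos_pos zero_less_power)
  then have "X / Y \<le> 0" using False by (simp add: divide_nonpos_pos)
  also have "0 \<le> (\<beta> ^ k / (\<alpha> * \<rho>)) ^ N" using \<alpha> \<beta> \<rho> by simp
  finally show ?thesis .
next
  case X: True
  define D where "D = T * (\<beta> * \<rho>) ^ (k - 1) * \<Phi>"
  have D: "0 < D" unfolding D_def using T \<beta> \<rho> \<Phi> by simp
  then have "0 < Y" using lower unfolding D_def[symmetric] by (meson less_le_trans zero_less_divide_1_iff)
  then have "1 / Y \<le> D" using lower D unfolding D_def[symmetric] by (simp add: field_simps)
  then have "X / Y \<le> X * D" using X by (metis mult_left_mono times_divide_eq_right mult_1_right)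
  also have "\<dots> = (X * \<rho> ^ (k + N - 1) * \<alpha> ^ N * \<Phi>) * T * \<beta> ^ (k - 1) / (\<alpha> * \<rho>) ^ N"
  proof -
    have "\<rho> ^ (k + N - 1) = \<rho> ^ (k - 1) * \<rho> ^ N" using k by (simp flip: power_add)
    then show ?thesis unfolding D_def using \<rho> \<alpha> by (simp add: field_simps power_mult_distrib)
  qed
  also have "\<dots> \<le> (1 / T) * T * \<beta> ^ (k - 1) / (\<alpha> * \<rho>) ^ N"
    using upper T \<beta> \<rho> \<alpha> by (intro divide_right_mono mult_right_mono) auto
  also have "\<dots> \<le> \<beta> ^ (k * N) / (\<alpha> * \<rho>) ^ N"
  proof -
    have "k - 1 \<le> k * N" using N by (metis diff_le_self le_trans mult_le_mono2 nat_mult_1_right)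
    then show ?thesis using T \<beta> \<rho> \<alpha> by (simp add: divide_right_mono power_increasing)
  qed
  also have "\<dots> = (\<beta> ^ k / (\<alpha> * \<rho>)) ^ N" by (simp add: power_divide power_mult)
  finally show ?thesis .
qed

locale finite_ground =
  fixes Z :: "real set"
  assumes finite_Z: "finite Z"
begin

lemma partition_finite: "partition_on Z Q \<Longrightarrow> finite Q"
  using finite_elements[OF finite_Z] .

lemma partition_block:
  assumes "partition_on Z Q" "B \<in> Q"
  shows "finite B" "B \<noteq> {}" "B \<subseteq> Z"
  using assms finite_Z partition_onD1 partition_onD3 by (auto intro: finite_subset)

lemma merge_blocks_partition:
  assumes P: "partition_on Z Q" and B: "B1 \<in> Q" "B2 \<in> Q" "B1 \<noteq> B2"
  shows "partition_on Z (merge_blocks Q B1 B2)"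
    and "card (merge_blocks Q B1 B2) + 1 = card Q"
    and "Q - merge_blocks Q B1 B2 = {B1, B2}"
proof -
  have "partition_on (\<Union>{B1, B2}) {B1 \<union> B2}"
    using partition_on_space[of "B1 \<union> B2"] partition_block(2)[OF P B(1)] by simp
  from partition_on_replace_blocks[OF P _ this] B
  show "partition_on Z (merge_blocks Q B1 B2)"
    unfolding merge_blocks_def by simp
  have notin: "B1 \<union> B2 \<notin> Q" using partition_on_union_notin[OF P B] .
  have "card {B1, B2} \<le> card Q" using partition_finite[OF P] B by (intro card_mono) auto
  then show "card (merge_blocks Q B1 B2) + 1 = card Q"
    unfolding merge_blocks_def using notin partition_finite[OF P] B
    by (simp add: card_Diff_subset)
  show "Q - merge_blocks Q B1 B2 = {B1, B2}"
    unfolding merge_blocks_def using notin B by auto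
qed

lemma merge_step_partition:
  assumes P: "partition_on Z Q" and M: "merge_step Q Q'"
  shows "partition_on Z Q'" "card Q' + 1 = card Q"
  using M merge_blocks_partition(1,2)[OF P] unfolding merge_step_def by auto

lemma split_block_parts:
  assumes P: "partition_on Z Q" and G: "(B, a) \<in> gaps Q"
  shows "{x \<in> B. x \<le> a} \<notin> Q" "{x \<in> B. a < x} \<notin> Q"
    and "partition_on B {{x \<in> B. x \<le> a}, {x \<in> B. a < x}}"
proof -
  have B: "B \<in> Q" "a \<in> B" "a < Max B" using G by (auto simp: gaps_iff)
  have max: "Max B \<in> B" using partition_block(1,2)[OF P B(1)] by simp
  show "{x \<in> B. x \<le> a} \<notin> Q"
  proof
    assume "{x \<in> B. x \<le> a} \<in> Q"
    then have "{x \<in> B. x \<le> a} = B" using partition_on_block_eq[OF P _ B(1), of _ a] B by blast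
    then have "Max B \<le> a" using max by blast
    then show False using B(3) by simp
  qed
  show "{x \<in> B. a < x} \<notin> Q"
  proof
    assume "{x \<in> B. a < x} \<in> Q"
    then have "{x \<in> B. a < x} = B" using partition_on_block_eq[OF P _ B(1), of _ "Max B"] B max by blast
    then have "a < a" using B(2) by blast
    then show False by simp
  qed
  show "partition_on B {{x \<in> B. x \<le> a}, {x \<in> B. a < x}}"
  proof (rule partition_onI)
    show "\<Union>{{x \<in> B. x \<le> a}, {x \<in> B. a < x}} = B" by auto
    show "{} \<notin> {{x \<in> B. x \<le> a}, {x \<in> B. a < x}}" using B max by blast
    fix p q assume "p \<in> {{x \<in> B. x \<le> a}, {x \<in> B. a < x}}" "q \<in> {{x \<in> B. x \<le> a}, {x \<in> B. a < x}}"
      "p \<noteq> q"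
    then show "disjnt p q" by (auto simp: disjnt_def)
  qed
qed

lemma split_block_partition:
  assumes P: "partition_on Z Q" and G: "(B, a) \<in> gaps Q"
  shows "partition_on Z (split_block Q B a)"
    and "card (split_block Q B a) = card Q + 1"
    and "merge_step (split_block Q B a) Q"
proof -
  note parts = split_block_parts[OF P G]
  have B: "B \<in> Q" "a \<in> B" "a < Max B" using G by (auto simp: gaps_iff)
  have "partition_on (\<Union>{B}) {{x \<in> B. x \<le> a}, {x \<in> B. a < x}}" using parts(3) by simp
  from partition_on_replace_blocks[OF P _ this] B
  show "partition_on Z (split_block Q B a)"
    unfolding split_block_def by simp
  have "a \<in> {x \<in> B. x \<le> a}" "a \<notin> {x \<in> B. a < x}" using B(2) by auto
  then have ne: "{x \<in> B. x \<le> a} \<noteq> {x \<in> B. a < x}" by blast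
  have "card Q > 0" using partition_finite[OF P] B(1) card_gt_0_iff by blast
  then have "card (Q - {B}) + 1 = card Q" using B(1) by simp
  then show "card (split_block Q B a) = card Q + 1"
    unfolding split_block_def using partition_finite[OF P] parts(1,2) ne by simp
  have "{x \<in> B. x \<le> a} \<union> {x \<in> B. a < x} = B" by auto
  moreover have "split_block Q B a - {{x \<in> B. x \<le> a}, {x \<in> B. a < x}} = Q - {B}"
    unfolding split_block_def using parts(1,2) by blast
  ultimately have "merge_blocks (split_block Q B a) {x \<in> B. x \<le> a} {x \<in> B. a < x} = Q"
    unfolding merge_blocks_def using B(1) by (simp add: insert_absorb)
  moreover have "{x \<in> B. x \<le> a} \<in> split_block Q B a" "{x \<in> B. a < x} \<in> split_block Q B a"
    unfolding split_block_def by simp_all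
  ultimately show "merge_step (split_block Q B a) Q"
    unfolding merge_step_def using ne by metis
qed

lemma gaps_eq_Sigma:
  assumes P: "partition_on Z Q"
  shows "gaps Q = Sigma Q (\<lambda>B. B - {Max B})"
proof -
  have "a \<le> Max B" if "B \<in> Q" "a \<in> B" for B a
    using partition_block(1)[OF P that(1)] that(2) by simp
  then show ?thesis unfolding gaps_def by force
qed

lemma finite_gaps: "partition_on Z Q \<Longrightarrow> finite (gaps Q)"
  using partition_finite partition_block(1) by (simp add: gaps_eq_Sigma)

lemma card_gaps_add_card:
  assumes P: "partition_on Z Q"
  shows "card (gaps Q) + card Q = card Z"
proof -
  have blocks: "finite B" "B \<noteq> {}" if "B \<in> Q" for B
    using partition_block[OF P that] by auto
  have gaps: "card (gaps Q) = (\<Sum>B\<in>Q. card B - 1)"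
    unfolding gaps_eq_Sigma[OF P] using partition_finite[OF P] blocks
    by (simp add: card_SigmaI card_Diff_singleton)
  have "card Z = (\<Sum>B\<in>Q. card B)"
    using sum.partition[OF finite_Z P, of "\<lambda>_. 1 :: nat"] by simp
  also have "\<dots> = (\<Sum>B\<in>Q. (card B - 1) + 1)"
    using blocks by (intro sum.cong) (auto simp: Suc_leI card_gt_0_iff)
  also have "\<dots> = (\<Sum>B\<in>Q. card B - 1) + card Q"
    by (subst sum.distrib) simp
  finally show ?thesis using gaps by simp
qed

lemma card_gaps_merge_blocks:
  assumes P: "partition_on Z Q" and B: "B1 \<in> Q" "B2 \<in> Q" "B1 \<noteq> B2"
  shows "card (gaps (merge_blocks Q B1 B2)) = card (gaps Q) + 1"
  using card_gaps_add_card[OF P] card_gaps_add_card[OF merge_blocks_partition(1)[OF P B]]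
    merge_blocks_partition(2)[OF P B] by simp

lemma card_gaps_split_block:
  assumes P: "partition_on Z Q" and G: "(B, a) \<in> gaps Q"
  shows "card (gaps (split_block Q B a)) + 1 = card (gaps Q)"
  using card_gaps_add_card[OF P] card_gaps_add_card[OF split_block_partition(1)[OF P G]]
    split_block_partition(2)[OF P G] by simp

lemma gaps_empty_imp_pi0:
  assumes P: "partition_on Z Q" and E: "gaps Q = {}"
  shows "Q = pi0 Z"
proof -
  have single: "B = {Max B}" if "B \<in> Q" for B
    using E partition_block[OF P that] that unfolding gaps_eq_Sigma[OF P] by auto
  show ?thesis
    unfolding pi0_eq_image
  proof (intro equalityI subsetI)
    fix B assume "B \<in> Q"
    then show "B \<in> (\<lambda>x. {x}) ` Z"
      using single partition_block(3)[OF P] by (metis image_eqI insert_subset)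
  next
    fix C assume "C \<in> (\<lambda>x. {x}) ` Z"
    then obtain x where x: "x \<in> Z" "C = {x}" by blast
    then obtain B where "B \<in> Q" "x \<in> B" using partition_onD1[OF P] by blast
    then show "C \<in> Q" using single x by (metis singletonD)
  qed
qed

lemma finite_distances: "finite {\<bar>x - y\<bar> | x y. x \<in> Z \<and> y \<in> Z \<and> x \<noteq> y}"
proof (rule finite_subset)
  show "{\<bar>x - y\<bar> | x y. x \<in> Z \<and> y \<in> Z \<and> x \<noteq> y} \<subseteq> (\<lambda>(x, y). \<bar>x - y\<bar>) ` (Z \<times> Z)"
    by auto
qed (use finite_Z in simp)

lemma min_dist_le:
  assumes "x \<in> Z" "y \<in> Z" "x \<noteq> y"
  shows "min_dist Z \<le> \<bar>x - y\<bar>"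
  unfolding min_dist_def using assms by (intro Min_le finite_distances) auto

lemma gap_next:
  assumes P: "partition_on Z Q" and G: "(B, a) \<in> gaps Q"
  shows "Min {y \<in> B. a < y} \<in> B" "a < Min {y \<in> B. a < y}"
proof -
  have B: "B \<in> Q" "a \<in> B" "a < Max B" using G by (auto simp: gaps_iff)
  have "Max B \<in> B" using partition_block(1,2)[OF P B(1)] by simp
  then have "finite {y \<in> B. a < y}" "{y \<in> B. a < y} \<noteq> {}"
    using partition_block(1)[OF P B(1)] B by auto
  from Min_in[OF this] show "Min {y \<in> B. a < y} \<in> B" "a < Min {y \<in> B. a < y}" by auto
qed

lemma gap_length_ge_min_dist:
  assumes P: "partition_on Z Q" and G: "x \<in> gaps Q"
  shows "min_dist Z \<le> gap_length x" "0 < gap_length x"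
proof -
  obtain B a where x: "x = (B, a)" by (cases x)
  note succ = gap_next[OF P G[unfolded x]]
  have "B \<subseteq> Z" "a \<in> B" using G partition_block(3)[OF P] by (auto simp: x gaps_iff)
  then show "min_dist Z \<le> gap_length x"
    using min_dist_le[of "Min {y \<in> B. a < y}" a] succ by (auto simp: x gap_length_def)
  show "0 < gap_length x" using succ by (simp add: x gap_length_def)
qed

lemma min_dist_pos:
  assumes P: "partition_on Z Q" and ne: "gaps Q \<noteq> {}"
  shows "0 < min_dist Z"
proof -
  obtain B a where G: "(B, a) \<in> gaps Q" using ne by auto
  have "B \<subseteq> Z" "a \<in> B" using G partition_block(3)[OF P] by (auto simp: gaps_iff)
  then have "{\<bar>x - y\<bar> | x y. x \<in> Z \<and> y \<in> Z \<and> x \<noteq> y} \<noteq> {}"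
    using gap_next[OF P G] by force
  then show ?thesis
    unfolding min_dist_def by (auto simp: Min_gr_iff[OF finite_distances])
qed

lemma merge_gap_in_gaps:
  assumes P: "partition_on Z Q" and B: "B1 \<in> Q" "B2 \<in> Q" "B1 \<noteq> B2"
  shows "merge_gap B1 B2 ` gaps Q \<subseteq> gaps (merge_blocks Q B1 B2)"
proof (rule image_subsetI)
  fix x assume "x \<in> gaps Q"
  then obtain C c where x: "x = (C, c)" and C: "C \<in> Q" "c \<in> C" "c < Max C"
    by (cases x) (auto simp: gaps_iff)
  show "merge_gap B1 B2 x \<in> gaps (merge_blocks Q B1 B2)"
  proof (cases "C = B1 \<or> C = B2")
    case True
    have "finite (B1 \<union> B2)" using partition_block(1)[OF P] B by auto
    then have "Max C \<le> Max (B1 \<union> B2)" using True C(2) by (intro Max_mono) auto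
    then show ?thesis using True C by (auto simp: x merge_gap_def gaps_iff merge_blocks_def)
  qed (use C in \<open>auto simp: x merge_gap_def gaps_iff merge_blocks_def\<close>)
qed

lemma inj_on_merge_gap:
  assumes P: "partition_on Z Q" and B: "B1 \<in> Q" "B2 \<in> Q" "B1 \<noteq> B2"
  shows "inj_on (merge_gap B1 B2) (gaps Q)"
proof (rule inj_onI, clarify)
  fix C c C' c'
  assume G: "(C, c) \<in> gaps Q" "(C', c') \<in> gaps Q"
    and eq: "merge_gap B1 B2 (C, c) = merge_gap B1 B2 (C', c')"
  have disj: "B1 \<inter> B2 = {}"
    using partition_onD2[OF P] B by (auto simp: pairwise_def disjnt_def)
  have C: "C \<in> Q" "c \<in> C" "C' \<in> Q" "c' \<in> C'" using G by (auto simp: gaps_iff)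
  have "c = c'" using eq by (auto simp: merge_gap_def split: if_splits)
  moreover have "C = C'"
    using eq partition_on_union_notin[OF P B] C disj \<open>c = c'\<close>
    by (auto simp: merge_gap_def split: if_splits)
  ultimately show "C = C' \<and> c = c'" by simp
qed

lemma gap_length_merge_gap_le:
  assumes P: "partition_on Z Q" and B: "B1 \<in> Q" "B2 \<in> Q" and G: "x \<in> gaps Q"
  shows "gap_length (merge_gap B1 B2 x) \<le> gap_length x"
proof -
  obtain C c where x: "x = (C, c)" "C \<in> Q" "c \<in> C" "c < Max C"
    using G by (cases x) (auto simp: gaps_iff)
  show ?thesis
  proof (cases "C = B1 \<or> C = B2")
    case True
    have "Max C \<in> C" using partition_block(1)[OF P x(2)] x(3) by (intro Max_in) auto
    then have "{y \<in> C. c < y} \<noteq> {}" using x(4) by auto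
    moreover have "finite (B1 \<union> B2)" using partition_block(1)[OF P] B by auto
    ultimately have "Min {y \<in> B1 \<union> B2. c < y} \<le> Min {y \<in> C. c < y}"
      using True by (intro Min_antimono) auto
    then show ?thesis using True x(1) by (simp add: merge_gap_def gap_length_def)
  qed (simp add: x(1) merge_gap_def)
qed

lemma split_gap_in_gaps:
  assumes P: "partition_on Z Q" and G: "(B, a) \<in> gaps Q"
  shows "split_gap B a ` (gaps Q - {(B, a)}) \<subseteq> gaps (split_block Q B a)"
proof (rule image_subsetI)
  have B: "B \<in> Q" "a \<in> B" "a < Max B" using G by (auto simp: gaps_iff)
  have fin: "finite B" using partition_block(1)[OF P B(1)] .
  have max: "Max B \<in> B" using fin B(2) by (intro Max_in) auto
  fix x assume "x \<in> gaps Q - {(B, a)}"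
  then obtain C c where x: "x = (C, c)" and C: "C \<in> Q" "c \<in> C" "c < Max C"
    and ne: "(C, c) \<noteq> (B, a)"
    by (cases x) (auto simp: gaps_iff)
  show "split_gap B a x \<in> gaps (split_block Q B a)"
  proof (cases "C = B")
    case True
    have "a \<le> Max {y \<in> B. y \<le> a}" "Max B \<le> Max {y \<in> B. a < y}"
      using fin B max by (auto intro: Max_ge)
    then show ?thesis
      using True C ne by (auto simp: x split_gap_def gaps_iff split_block_def)
  qed (use C in \<open>auto simp: x split_gap_def gaps_iff split_block_def\<close>)
qed

lemma inj_on_split_gap:
  assumes P: "partition_on Z Q" and G: "(B, a) \<in> gaps Q"
  shows "inj_on (split_gap B a) (gaps Q - {(B, a)})"
proof (rule inj_onI)
  fix x x' assume "x \<in> gaps Q - {(B, a)}" "x' \<in> gaps Q - {(B, a)}"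
    and eq: "split_gap B a x = split_gap B a x'"
  then have C: "fst x \<in> Q" "fst x' \<in> Q" by (auto simp: gaps_def)
  have moved: "fst (split_gap B a y) \<notin> Q" if "fst y = B" for y
    using split_block_parts(1,2)[OF P G] that by (simp add: split_gap_def)
  have fixed: "split_gap B a y = y" if "fst y \<noteq> B" for y
    using that by (simp add: split_gap_def)
  have "snd (split_gap B a y) = snd y" for y by (simp add: split_gap_def)
  then have "snd x = snd x'" using arg_cong[OF eq, of snd] by simp
  moreover have "fst x = fst x'"
    using moved[of x] moved[of x'] fixed[of x] fixed[of x'] eq C
    by (cases "fst x = B"; cases "fst x' = B") metis+
  ultimately show "x = x'" by (simp add: prod_eq_iff)
qed

lemma gap_length_split_gap:
  assumes P: "partition_on Z Q" and G: "(B, a) \<in> gaps Q" and x: "x \<in> gaps Q - {(B, a)}"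
  shows "gap_length (split_gap B a x) = gap_length x"
proof -
  have B: "B \<in> Q" "a \<in> B" "a < Max B" using G by (auto simp: gaps_iff)
  have fin: "finite B" using partition_block(1)[OF P B(1)] .
  obtain C c where xc: "x = (C, c)" "C \<in> Q" "c \<in> C" "(C, c) \<noteq> (B, a)"
    using x by (cases x) (auto simp: gaps_iff)
  show ?thesis
  proof (cases "C = B")
    case True
    show ?thesis
    proof (cases "c \<le> a")
      case True
      with xc \<open>C = B\<close> have "c < a" by auto
      define m where "m = Min {y \<in> B. c < y}"
      have m: "m \<in> B" "c < m"
        using gap_next[OF P, of B c] x xc \<open>C = B\<close> by (simp_all add: m_def)
      have "m \<le> a" unfolding m_def using fin B(2) \<open>c < a\<close> by (intro Min_le) auto
      have "Min {y \<in> {y \<in> B. y \<le> a}. c < y} \<le> m"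
        using fin m \<open>m \<le> a\<close> by (intro Min_le) auto
      moreover have "m \<le> Min {y \<in> {y \<in> B. y \<le> a}. c < y}"
        unfolding m_def using fin B(2) \<open>c < a\<close> by (intro Min_antimono) auto
      ultimately have "Min {y \<in> {y \<in> B. y \<le> a}. c < y} = Min {y \<in> B. c < y}"
        unfolding m_def by simp
      then show ?thesis using xc(1) \<open>C = B\<close> True by (simp add: split_gap_def gap_length_def)
    next
      case False
      then have "{y \<in> {y \<in> B. a < y}. c < y} = {y \<in> B. c < y}" by auto
      then show ?thesis using xc(1) \<open>C = B\<close> False by (simp add: split_gap_def gap_length_def)
    qed
  qed (simp add: xc(1) split_gap_def)
qed

lemma least_gap_sum_le:
  assumes P: "partition_on Z Q" and J: "J \<subseteq> gaps Q" "card J = j"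
  shows "least_gap_sum Q j \<le> (\<Sum>x\<in>J. gap_length x)"
  unfolding least_gap_sum_def using J finite_gaps[OF P] by (intro Min_le) auto

lemma least_gap_sum_attained:
  assumes P: "partition_on Z Q" and j: "j \<le> card (gaps Q)"
  obtains J where "J \<subseteq> gaps Q" "card J = j" "least_gap_sum Q j = (\<Sum>x\<in>J. gap_length x)"
proof -
  obtain J0 where "J0 \<subseteq> gaps Q" "card J0 = j" using obtain_subset_with_card_n[OF j] by metis
  then have "{J. J \<subseteq> gaps Q \<and> card J = j} \<noteq> {}" by auto
  then have "least_gap_sum Q j \<in> (\<lambda>J. \<Sum>x\<in>J. gap_length x) ` {J. J \<subseteq> gaps Q \<and> card J = j}"
    unfolding least_gap_sum_def using finite_gaps[OF P] by (intro Min_in) auto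
  then show ?thesis using that by auto
qed

lemma least_gap_sum_le_image:
  assumes P': "partition_on Z Q'" and f: "f ` A \<subseteq> gaps Q'" "inj_on f A"
    and shorter: "\<And>x. x \<in> A \<Longrightarrow> gap_length (f x) \<le> gap_length x"
    and J: "J \<subseteq> A" "card J = j"
  shows "least_gap_sum Q' j \<le> (\<Sum>x\<in>J. gap_length x)"
proof -
  have inj: "inj_on f J" using inj_on_subset[OF f(2) J(1)] .
  have "least_gap_sum Q' j \<le> (\<Sum>y\<in>f ` J. gap_length y)"
    using J f(1) card_image[OF inj] by (intro least_gap_sum_le[OF P']) auto
  also have "\<dots> = (\<Sum>x\<in>J. gap_length (f x))" using sum.reindex[OF inj] by simp
  also have "\<dots> \<le> (\<Sum>x\<in>J. gap_length x)" using shorter J(1) by (intro sum_mono) auto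
  finally show ?thesis .
qed

lemma least_gap_sum_merge_blocks:
  assumes P: "partition_on Z Q" and B: "B1 \<in> Q" "B2 \<in> Q" "B1 \<noteq> B2"
    and j: "j \<le> card (gaps Q)"
  shows "least_gap_sum (merge_blocks Q B1 B2) j \<le> least_gap_sum Q j"
proof -
  obtain J where "J \<subseteq> gaps Q" "card J = j" "least_gap_sum Q j = (\<Sum>x\<in>J. gap_length x)"
    using least_gap_sum_attained[OF P j] .
  then show ?thesis
    using least_gap_sum_le_image[OF merge_blocks_partition(1)[OF P B] merge_gap_in_gaps[OF P B]
        inj_on_merge_gap[OF P B] gap_length_merge_gap_le[OF P B(1,2)]]
    by simp
qed

lemma least_gap_sum_split_block:
  assumes P: "partition_on Z Q" and G: "(B, a) \<in> gaps Q"
    and J: "J \<subseteq> gaps Q - {(B, a)}" "card J = j"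
  shows "least_gap_sum (split_block Q B a) j \<le> (\<Sum>x\<in>J. gap_length x)"
  using least_gap_sum_le_image[OF split_block_partition(1)[OF P G] split_gap_in_gaps[OF P G]
      inj_on_split_gap[OF P G] _ J] gap_length_split_gap[OF P G] by simp

lemma least_gap_sum_card_gaps:
  assumes P: "partition_on Z Q"
  shows "least_gap_sum Q (card (gaps Q)) = total_gap Q"
proof -
  obtain J where J: "J \<subseteq> gaps Q" "card J = card (gaps Q)"
    "least_gap_sum Q (card (gaps Q)) = (\<Sum>x\<in>J. gap_length x)"
    using least_gap_sum_attained[OF P, of "card (gaps Q)"] by auto
  have "J = gaps Q" using card_subset_eq[OF finite_gaps[OF P] J(1,2)] .
  then show ?thesis using J(3) unfolding total_gap_def by simp
qed

lemma least_gap_sum_ge_min_dist: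
  assumes P: "partition_on Z Q" and j: "1 \<le> j" "j \<le> card (gaps Q)"
  shows "min_dist Z \<le> least_gap_sum Q j"
proof -
  obtain J where J: "J \<subseteq> gaps Q" "card J = j" "least_gap_sum Q j = (\<Sum>x\<in>J. gap_length x)"
    using least_gap_sum_attained[OF P j(2)] .
  have fin: "finite J" using J(1) finite_gaps[OF P] finite_subset by blast
  have "J \<noteq> {}" using J(2) j(1) by auto
  then obtain x where x: "x \<in> J" by blast
  have "gap_length x \<le> (\<Sum>x\<in>J. gap_length x)"
    using fin x J(1) gap_length_ge_min_dist(2)[OF P] by (intro member_le_sum) (auto intro: less_imp_le)
  then show ?thesis using J(1,3) x gap_length_ge_min_dist(1)[OF P, of x] by auto
qed

lemma least_gap_sum_nonneg:
  assumes P: "partition_on Z Q" and j: "j \<le> card (gaps Q)"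
  shows "0 \<le> least_gap_sum Q j"
proof -
  obtain J where J: "J \<subseteq> gaps Q" "least_gap_sum Q j = (\<Sum>x\<in>J. gap_length x)"
    using least_gap_sum_attained[OF P j] by metis
  have "0 \<le> gap_length x" if "x \<in> J" for x
    using gap_length_ge_min_dist(2)[OF P] J(1) that by (meson less_imp_le subsetD)
  then show ?thesis using J(2) by (simp add: sum_nonneg)
qed

lemma least_gap_sum_pos:
  assumes P: "partition_on Z Q" and j: "1 \<le> j" "j \<le> card (gaps Q)"
  shows "0 < least_gap_sum Q j"
proof -
  obtain J where J: "J \<subseteq> gaps Q" "card J = j" "least_gap_sum Q j = (\<Sum>x\<in>J. gap_length x)"
    using least_gap_sum_attained[OF P j(2)] .
  have "finite J" "J \<noteq> {}" using J(2) j(1) by (auto intro: card_ge_0_finite)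
  moreover have "0 < gap_length x" if "x \<in> J" for x
    using gap_length_ge_min_dist(2)[OF P] J(1) that by blast
  ultimately show ?thesis using J(3) by (simp add: sum_pos)
qed

lemma total_gap_ge_min_dist:
  assumes P: "partition_on Z Q" and ne: "gaps Q \<noteq> {}"
  shows "min_dist Z \<le> total_gap Q"
  using least_gap_sum_ge_min_dist[OF P, of "card (gaps Q)"] least_gap_sum_card_gaps[OF P] ne
    finite_gaps[OF P]
  by (simp add: Suc_leI card_gt_0_iff)

lemma least_gap_sum_split_block_Suc:
  assumes P: "partition_on Z Q" and G: "(B, a) \<in> gaps Q" and j: "j + 1 \<le> card (gaps Q)"
  shows "least_gap_sum (split_block Q B a) j \<le> least_gap_sum Q (j + 1)"
proof -
  obtain J where J: "J \<subseteq> gaps Q" "card J = j + 1"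
    "least_gap_sum Q (j + 1) = (\<Sum>x\<in>J. gap_length x)"
    using least_gap_sum_attained[OF P j] .
  have fin: "finite J" using J(1) finite_gaps[OF P] finite_subset by blast
  \<comment> \<open>drop the split gap if it was chosen, and an arbitrary gap otherwise\<close>
  obtain y where y: "y \<in> J" "(B, a) \<in> J \<Longrightarrow> y = (B, a)"
  proof (cases "(B, a) \<in> J")
    case False
    have "J \<noteq> {}" using J(2) by auto
    then show ?thesis using that False by blast
  qed (use that in blast)
  have "least_gap_sum (split_block Q B a) j \<le> (\<Sum>x\<in>J - {y}. gap_length x)"
    using J y fin by (intro least_gap_sum_split_block[OF P G]) auto
  also have "\<dots> = (\<Sum>x\<in>J. gap_length x) - gap_length y" using sum_diff1[of J _ y] fin y by simp
  also have "\<dots> \<le> (\<Sum>x\<in>J. gap_length x)"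
    using gap_length_ge_min_dist(2)[OF P, of y] y J(1) by auto
  finally show ?thesis using J(3) by simp
qed

lemma least_gap_sum_split_longest:
  assumes P: "partition_on Z Q" and G: "(B, a) \<in> gaps Q"
    and longest: "\<And>x. x \<in> gaps Q \<Longrightarrow> gap_length x \<le> gap_length (B, a)"
    and j: "j < card (gaps Q)"
  shows "least_gap_sum (split_block Q B a) j \<le> least_gap_sum Q j"
proof -
  obtain J where J: "J \<subseteq> gaps Q" "card J = j" "least_gap_sum Q j = (\<Sum>x\<in>J. gap_length x)"
    using least_gap_sum_attained[OF P] j by (metis less_imp_le)
  have finG: "finite (gaps Q)" using finite_gaps[OF P] .
  have fin: "finite J" using J(1) finG finite_subset by blast
  show ?thesis
  proof (cases "(B, a) \<in> J")
    case False
    then show ?thesis using least_gap_sum_split_block[OF P G _ J(2)] J(1,3) by auto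
  next
    case True
    \<comment> \<open>exchange the split gap for an unused one, which is no longer\<close>
    have "J \<noteq> gaps Q" using J(2) j by auto
    then obtain y where y: "y \<in> gaps Q" "y \<notin> J" using J(1) by blast
    define J' where "J' = insert y (J - {(B, a)})"
    have J': "J' \<subseteq> gaps Q - {(B, a)}" "card J' = j"
      using J(1,2) y True fin card_0_eq[OF fin] unfolding J'_def by (auto simp: card_insert_if)
    have "least_gap_sum (split_block Q B a) j \<le> (\<Sum>x\<in>J'. gap_length x)"
      by (rule least_gap_sum_split_block[OF P G J'])
    also have "\<dots> = gap_length y + ((\<Sum>x\<in>J. gap_length x) - gap_length (B, a))"
      unfolding J'_def using fin y True by (simp add: sum_diff1)
    also have "\<dots> \<le> (\<Sum>x\<in>J. gap_length x)" using longest[OF y(1)] by simp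
    finally show ?thesis using J(3) by simp
  qed
qed

lemma gap_potential_pos: "partition_on Z Q \<Longrightarrow> 0 < gap_potential Q"
  unfolding gap_potential_def using least_gap_sum_pos by (intro prod_pos) auto

lemma gap_potential_merge_blocks:
  assumes P: "partition_on Z Q" and B: "B1 \<in> Q" "B2 \<in> Q" "B1 \<noteq> B2"
    and ne: "gaps Q \<noteq> {}"
  shows "gap_potential (merge_blocks Q B1 B2) \<le> gap_potential Q * total_gap Q"
proof -
  define l where "l = card (gaps Q)"
  define Q' where "Q' = merge_blocks Q B1 B2"
  have l: "1 \<le> l" using ne finite_gaps[OF P] unfolding l_def by (simp add: Suc_leI card_gt_0_iff)
  have P': "partition_on Z Q'" unfolding Q'_def using merge_blocks_partition(1)[OF P B] .
  have l': "card (gaps Q') = l + 1" unfolding Q'_def l_def using card_gaps_merge_blocks[OF P B] .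
  have le: "least_gap_sum Q' j \<le> least_gap_sum Q j" if "j \<le> l" for j
    unfolding Q'_def using least_gap_sum_merge_blocks[OF P B] that l_def by simp
  have "gap_potential Q' = (\<Prod>j\<in>{1..<l}. least_gap_sum Q' j) * least_gap_sum Q' l"
    unfolding gap_potential_def l' using l by (simp add: prod.atLeastLessThan_Suc)
  also have "\<dots> \<le> (\<Prod>j\<in>{1..<l}. least_gap_sum Q j) * least_gap_sum Q l"
    using le least_gap_sum_nonneg[OF P'] least_gap_sum_nonneg[OF P] l'
    by (intro mult_mono prod_mono prod_nonneg conjI) (auto simp: l_def)
  also have "\<dots> = gap_potential Q * total_gap Q"
    unfolding gap_potential_def l_def least_gap_sum_card_gaps[OF P] ..
  finally show ?thesis unfolding Q'_def .
qed

lemma gap_potential_split_block: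
  assumes P: "partition_on Z Q" and G: "(B, a) \<in> gaps Q" and l: "2 \<le> card (gaps Q)"
  shows "min_dist Z * gap_potential (split_block Q B a) \<le> gap_potential Q"
proof -
  define l where "l = card (gaps Q)"
  define Q' where "Q' = split_block Q B a"
  have P': "partition_on Z Q'" unfolding Q'_def using split_block_partition(1)[OF P G] .
  have l': "card (gaps Q') = l - 1" unfolding Q'_def l_def using card_gaps_split_block[OF P G] by simp
  have "gap_potential Q' = (\<Prod>j\<in>{1..<l - 1}. least_gap_sum Q' j)"
    unfolding gap_potential_def l' ..
  also have "\<dots> \<le> (\<Prod>j\<in>{1..<l - 1}. least_gap_sum Q (j + 1))"
    using least_gap_sum_nonneg[OF P'] least_gap_sum_split_block_Suc[OF P G, folded Q'_def] l'
    by (intro prod_mono conjI) (auto simp: l_def)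
  also have "\<dots> = (\<Prod>j\<in>{2..<l}. least_gap_sum Q j)"
    using prod.shift_bounds_nat_ivl[of "least_gap_sum Q" 1 1 "l - 1"] l
    unfolding l_def by (simp add: numeral_2_eq_2)
  finally have le: "gap_potential Q' \<le> (\<Prod>j\<in>{2..<l}. least_gap_sum Q j)" .
  have "gap_potential Q = least_gap_sum Q 1 * (\<Prod>j\<in>{2..<l}. least_gap_sum Q j)"
    unfolding gap_potential_def l_def[symmetric] using l unfolding l_def
    by (simp add: prod.atLeast_Suc_lessThan numeral_2_eq_2)
  moreover have "min_dist Z * gap_potential Q' \<le> least_gap_sum Q 1 * (\<Prod>j\<in>{2..<l}. least_gap_sum Q j)"
    using le least_gap_sum_ge_min_dist[OF P, of 1] least_gap_sum_pos[OF P, of 1] l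
      gap_potential_pos[OF P'] least_gap_sum_nonneg[OF P]
    by (intro mult_mono prod_nonneg) (auto simp: l_def)
  ultimately show ?thesis unfolding Q'_def by simp
qed

lemma finite_partitions: "finite (partitions Z)"
  unfolding partitions_def using finitely_many_partition_on[OF finite_Z] .

lemma sum_split_rate:
  assumes P: "partition_on Z Q"
  shows "(\<Sum>Q'\<in>partitions Z. split_rate \<rho> Q Q') = \<rho> * total_gap Q"
proof -
  have "(\<lambda>x. split_block Q (fst x) (snd x)) ` gaps Q \<subseteq> partitions Z"
    using split_block_partition(1)[OF P] unfolding partitions_def by auto
  then have "(\<Sum>Q'\<in>partitions Z. split_rate \<rho> Q Q') = (\<Sum>x\<in>gaps Q. \<rho> * gap_length x)"
    unfolding split_rate_eq by (rule sum.group[OF finite_gaps[OF P] finite_partitions])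
  then show ?thesis unfolding total_gap_def by (simp add: sum_distrib_left)
qed

lemma sum_merge_rate:
  assumes P: "partition_on Z Q"
  shows "(\<Sum>Q'\<in>partitions Z. merge_rate Q Q') = real (card Q choose 2)"
proof -
  let ?pairs = "{A. A \<subseteq> Q \<and> card A = 2}"
  have fin: "finite Q" using partition_finite[OF P] .
  have "(\<lambda>A. insert (\<Union>A) (Q - A)) ` ?pairs \<subseteq> partitions Z"
  proof clarify
    fix A assume A: "A \<subseteq> Q" "card A = 2"
    then obtain B1 B2 where "A = {B1, B2}" "B1 \<noteq> B2" by (auto simp: card_2_iff)
    then show "insert (\<Union>A) (Q - A) \<in> partitions Z"
      using merge_blocks_partition(1)[OF P] A unfolding partitions_def merge_blocks_def by auto
  qed
  then have "(\<Sum>Q'\<in>partitions Z. card {A \<in> ?pairs. insert (\<Union>A) (Q - A) = Q'}) = (\<Sum>A\<in>?pairs. 1)"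
    using sum.group[OF _ finite_partitions, of ?pairs _ "\<lambda>_. 1 :: nat"] fin by simp
  then show ?thesis
    unfolding merge_rate_eq using n_subsets[OF fin, of 2]
    by (simp add: conj_assoc flip: of_nat_sum)
qed

lemma total_rate_eq:
  assumes P: "partition_on Z Q"
  shows "total_rate \<rho> Z Q = real (card Q choose 2) + \<rho> * total_gap Q"
  unfolding total_rate_def arg_rate_def sum.distrib sum_merge_rate[OF P] sum_split_rate[OF P] ..

lemma total_rate_pi0: "total_rate \<rho> Z (pi0 Z) = real (card Z choose 2)"
  unfolding total_rate_eq[OF pi0_partition] total_gap_def gaps_pi0 card_pi0 by simp

lemma total_rate_le_total_gap:
  assumes P: "partition_on Z Q" and ne: "gaps Q \<noteq> {}" and \<rho>: "0 < \<rho>"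
  shows "total_rate \<rho> Z Q \<le> (1 + gamma Z 1 / (\<rho> * min_dist Z)) * \<rho> * total_gap Q"
proof -
  have \<alpha>: "0 < min_dist Z" using min_dist_pos[OF P ne] .
  have "0 < card (gaps Q)" using ne finite_gaps[OF P] by (simp add: card_gt_0_iff)
  then have "real (card Q choose 2) \<le> gamma Z 1"
    using card_gaps_add_card[OF P] by (intro choose_two_le_gamma) linarith
  also have "\<dots> \<le> gamma Z 1 * (total_gap Q / min_dist Z)"
  proof -
    have "1 \<le> total_gap Q / min_dist Z" using total_gap_ge_min_dist[OF P ne] \<alpha> by simp
    then show ?thesis using gamma_nonneg[of Z 1] by (metis mult_left_mono mult_1_right)
  qed
  also have "\<dots> = gamma Z 1 / (\<rho> * min_dist Z) * \<rho> * total_gap Q" using \<rho> by simp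
  finally show ?thesis unfolding total_rate_eq[OF P] by (simp add: algebra_simps)
qed

lemma inverse_total_rate_ge:
  assumes P: "partition_on Z Q" and ne: "gaps Q \<noteq> {}" and \<rho>: "0 < \<rho>"
    and c: "total_gap Q \<le> c"
  shows "1 / ((1 + gamma Z 1 / (\<rho> * min_dist Z)) * \<rho> * c) \<le> 1 / total_rate \<rho> Z Q"
proof -
  have "0 < \<rho> * total_gap Q"
    using total_gap_ge_min_dist[OF P ne] min_dist_pos[OF P ne] \<rho> by simp
  also have "\<dots> \<le> total_rate \<rho> Z Q" unfolding total_rate_eq[OF P] by simp
  finally have T: "0 < total_rate \<rho> Z Q" .
  have "0 \<le> (1 + gamma Z 1 / (\<rho> * min_dist Z)) * \<rho>"
    using gamma_nonneg[of Z 1] min_dist_pos[OF P ne] \<rho> by simp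
  then have "total_rate \<rho> Z Q \<le> (1 + gamma Z 1 / (\<rho> * min_dist Z)) * \<rho> * c"
    using total_rate_le_total_gap[OF P ne \<rho>] c by (meson mult_left_mono order_trans)
  then show ?thesis using T by (intro divide_left_mono) auto
qed

lemma arg_rate_nonneg:
  assumes P: "partition_on Z Q" and "0 \<le> \<rho>"
  shows "0 \<le> arg_rate \<rho> Q Q'"
proof -
  have "0 \<le> \<rho> * gap_length x" if "x \<in> gaps Q" for x
    using assms(2) gap_length_ge_min_dist(2)[OF P that] by simp
  then have "0 \<le> split_rate \<rho> Q Q'" unfolding split_rate_eq by (intro sum_nonneg) blast
  then show ?thesis unfolding arg_rate_def merge_rate_def by simp
qed

lemma jump_prob_bounds:
  assumes P: "partition_on Z Q" and Q': "Q' \<in> partitions Z" and "0 \<le> \<rho>"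
  shows "0 \<le> jump_prob \<rho> Z Q Q'" "jump_prob \<rho> Z Q Q' \<le> 1"
proof -
  have nonneg: "0 \<le> arg_rate \<rho> Q Q''" for Q'' using arg_rate_nonneg[OF P assms(3)] .
  have "arg_rate \<rho> Q Q' \<le> total_rate \<rho> Z Q"
    unfolding total_rate_def using nonneg Q' finite_partitions by (intro member_le_sum) auto
  then show "0 \<le> jump_prob \<rho> Z Q Q'" "jump_prob \<rho> Z Q Q' \<le> 1"
    unfolding jump_prob_def using nonneg[of Q'] by (auto simp: divide_le_eq_1)
qed

lemma arg_rate_merge_step:
  assumes P: "partition_on Z Q" and M: "merge_step Q Q'"
  shows "arg_rate \<rho> Q Q' = 1"
proof -
  obtain B1 B2 where B: "B1 \<in> Q" "B2 \<in> Q" "B1 \<noteq> B2" and Q': "Q' = merge_blocks Q B1 B2"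
    using M unfolding merge_step_def by blast
  have "{A. A \<subseteq> Q \<and> card A = 2 \<and> insert (\<Union>A) (Q - A) = Q'} = {{B1, B2}}"
  proof (intro equalityI subsetI)
    fix A assume "A \<in> {A. A \<subseteq> Q \<and> card A = 2 \<and> insert (\<Union>A) (Q - A) = Q'}"
    then have A: "A \<subseteq> Q" "card A = 2" "insert (\<Union>A) (Q - A) = Q'" by auto
    then obtain C1 C2 where C: "A = {C1, C2}" "C1 \<noteq> C2" by (auto simp: card_2_iff)
    then have "merge_blocks Q C1 C2 = Q'" "C1 \<in> Q" "C2 \<in> Q"
      using A unfolding merge_blocks_def by auto
    then show "A \<in> {{B1, B2}}"
      using merge_blocks_partition(3)[OF P B] merge_blocks_partition(3)[OF P _ _ C(2)] C Q' by simp
  qed (use B Q' in \<open>auto simp: merge_blocks_def\<close>)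
  then have "merge_rate Q Q' = 1" unfolding merge_rate_eq using B(3) by simp
  moreover have no_split: "{x \<in> gaps Q. split_block Q (fst x) (snd x) = Q'} = {}"
  proof -
    have "card (split_block Q (fst x) (snd x)) \<noteq> card Q'" if "x \<in> gaps Q" for x
      using split_block_partition(2)[OF P, of "fst x" "snd x"] merge_blocks_partition(2)[OF P B]
        Q' that by simp
    then show ?thesis by blast
  qed
  ultimately show ?thesis unfolding arg_rate_def split_rate_eq no_split by simp
qed

lemma jump_prob_merge_step:
  "partition_on Z Q \<Longrightarrow> merge_step Q Q' \<Longrightarrow> jump_prob \<rho> Z Q Q' = 1 / total_rate \<rho> Z Q"
  unfolding jump_prob_def by (simp add: arg_rate_merge_step)

lemma theta_merge_step_pos: "partition_on Z Q \<Longrightarrow> merge_step Q Q' \<Longrightarrow> 0 < theta Q Q'"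
  unfolding theta_def by (simp add: arg_rate_merge_step)

lemma merge_step_potential:
  assumes P: "partition_on Z Q" and ne: "gaps Q \<noteq> {}" and M: "merge_step Q Q'" and \<rho>: "0 < \<rho>"
  shows "\<rho> * jump_prob \<rho> Z Q Q' * gap_potential Q' \<le> gap_potential Q"
proof -
  define T where "T = total_rate \<rho> Z Q"
  have T: "\<rho> * total_gap Q \<le> T" unfolding T_def total_rate_eq[OF P] by simp
  moreover have "0 < \<rho> * total_gap Q"
    using total_gap_ge_min_dist[OF P ne] min_dist_pos[OF P ne] \<rho> by simp
  ultimately have T0: "0 < T" by linarith
  have "gap_potential Q' \<le> gap_potential Q * total_gap Q"
    using gap_potential_merge_blocks[OF P _ _ _ ne] M unfolding merge_step_def by blast
  have "\<rho> * jump_prob \<rho> Z Q Q' * gap_potential Q' = \<rho> / T * gap_potential Q'"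
    unfolding jump_prob_merge_step[OF P M] T_def by simp
  also have "\<dots> \<le> \<rho> / T * (gap_potential Q * total_gap Q)"
    using \<open>gap_potential Q' \<le> _\<close> \<rho> T0 by (intro mult_left_mono) auto
  also have "\<dots> = gap_potential Q * (\<rho> * total_gap Q / T)" by simp
  also have "\<dots> \<le> gap_potential Q"
    using T T0 gap_potential_pos[OF P] by (intro mult_left_le) auto
  finally show ?thesis .
qed

lemma split_step_potential:
  assumes P: "partition_on Z Q" and G: "(B, a) \<in> gaps Q" and l: "2 \<le> card (gaps Q)"
    and \<rho>: "0 \<le> \<rho>"
  shows "min_dist Z * jump_prob \<rho> Z Q (split_block Q B a) * gap_potential (split_block Q B a)
    \<le> gap_potential Q"
proof -
  let ?Q' = "split_block Q B a"
  have P': "?Q' \<in> partitions Z"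
    using split_block_partition(1)[OF P G] unfolding partitions_def by simp
  have "0 \<le> gap_potential ?Q'"
    using gap_potential_pos split_block_partition(1)[OF P G] less_imp_le by blast
  then have "jump_prob \<rho> Z Q ?Q' * gap_potential ?Q' \<le> gap_potential ?Q'"
    using jump_prob_bounds[OF P P' \<rho>] by (intro mult_left_le_one_le)
  moreover have "0 < min_dist Z" using min_dist_pos[OF P] G by auto
  ultimately have "min_dist Z * jump_prob \<rho> Z Q ?Q' * gap_potential ?Q' \<le> min_dist Z * gap_potential ?Q'"
    by (simp add: mult.assoc)
  also have "\<dots> \<le> gap_potential Q" using gap_potential_split_block[OF P G l] .
  finally show ?thesis .
qed

text \<open>Here s counts the splits among the first i steps: each merge lowers the number of blocks
  by one and each split raises it by one, whence card Q + i = card Z + 2 s.\<close>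

lemma potential_weight_step:
  assumes P: "partition_on Z Q" and ne: "gaps Q \<noteq> {}"
    and Q': "Q' \<in> partitions Z" "Q' \<noteq> pi0 Z" "0 < theta Q Q'" and \<rho>: "0 < \<rho>"
    and X: "0 \<le> X" and s: "card Q + i = card Z + 2 * s"
    and bound: "X * \<rho> ^ (i - s - 1) * min_dist Z ^ s * gap_potential Q \<le> c"
  shows "\<exists>s'. card Q' + Suc i = card Z + 2 * s' \<and>
    X * jump_prob \<rho> Z Q Q' * \<rho> ^ (Suc i - s' - 1) * min_dist Z ^ s' * gap_potential Q' \<le> c"
proof -
  define K where "K = X * \<rho> ^ (i - s - 1) * min_dist Z ^ s"
  have K: "0 \<le> K" unfolding K_def using X \<rho> min_dist_pos[OF P ne] by simp
  have "0 < card (gaps Q)" using ne finite_gaps[OF P] by (simp add: card_gt_0_iff)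
  then have "card Q < card Z" using card_gaps_add_card[OF P] by linarith
  then have "2 * s < i" using s by simp
  from theta_pos_cases[OF Q'(3)] show ?thesis
  proof (elim disjE exE conjE)
    assume M: "merge_step Q Q'"
    have "X * jump_prob \<rho> Z Q Q' * \<rho> ^ (Suc i - s - 1) * min_dist Z ^ s * gap_potential Q'
        = K * (\<rho> * jump_prob \<rho> Z Q Q' * gap_potential Q')"
    proof -
      have "Suc i - s - 1 = Suc (i - s - 1)" using \<open>2 * s < i\<close> by simp
      then show ?thesis by (simp add: K_def algebra_simps)
    qed
    also have "\<dots> \<le> K * gap_potential Q" using merge_step_potential[OF P ne M \<rho>] K by (rule mult_left_mono)
    finally show ?thesis using bound merge_step_partition(2)[OF P M] s unfolding K_def
      by (intro exI[of _ s]) simp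
  next
    fix B a assume G: "(B, a) \<in> gaps Q" and split: "Q' = split_block Q B a"
    have "gaps Q' \<noteq> {}"
      using Q'(1,2) gaps_empty_imp_pi0 unfolding partitions_def by blast
    then have "0 < card (gaps Q')"
      using finite_gaps split_block_partition(1)[OF P G] unfolding split by (simp add: card_gt_0_iff)
    then have l: "2 \<le> card (gaps Q)" using card_gaps_split_block[OF P G] unfolding split by simp
    have "X * jump_prob \<rho> Z Q Q' * \<rho> ^ (Suc i - Suc s - 1) * min_dist Z ^ Suc s * gap_potential Q'
        = K * (min_dist Z * jump_prob \<rho> Z Q Q' * gap_potential Q')"
      by (simp add: K_def algebra_simps)
    also have "\<dots> \<le> K * gap_potential Q"
      using split_step_potential[OF P G l] \<rho> K unfolding split by (simp add: mult_left_mono)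
    finally show ?thesis using bound split_block_partition(2)[OF P G] s unfolding K_def split
      by (intro exI[of _ "Suc s"]) simp
  qed
qed

lemma prefix_weight_bound:
  fixes q :: "nat \<Rightarrow> real set set"
  assumes \<rho>: "0 < \<rho>" and start: "q 0 = pi0 Z"
    and part: "\<And>i. i \<le> m \<Longrightarrow> partition_on Z (q i)"
    and not_pi0: "\<And>i. 1 \<le> i \<Longrightarrow> i \<le> m \<Longrightarrow> q i \<noteq> pi0 Z"
    and theta: "\<And>i. i < m \<Longrightarrow> 0 < theta (q i) (q (Suc i))"
    and i: "1 \<le> i" "i \<le> m"
  shows "\<exists>s. card (q i) + i = card Z + 2 * s \<and>
    (\<Prod>t<i. jump_prob \<rho> Z (q t) (q (Suc t))) * \<rho> ^ (i - s - 1) * min_dist Z ^ s * gap_potential (q i)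
      \<le> 1 / total_rate \<rho> Z (pi0 Z)"
  using i
proof (induction i rule: dec_induct)
  case base
  have M: "merge_step (pi0 Z) (q 1)"
    using theta_pos_cases theta[of 0] i start gaps_pi0 by fastforce
  have card: "card (q 1) + 1 = card Z"
    using merge_step_partition(2)[OF pi0_partition M] card_pi0 by simp
  then have "card (gaps (q 1)) = 1"
    using card_gaps_add_card[OF merge_step_partition(1)[OF pi0_partition M]] by simp
  then show ?case
    using card jump_prob_merge_step[OF pi0_partition M] start
    by (intro exI[of _ 0]) (simp add: gap_potential_def)
next
  case (step i)
  let ?X = "\<Prod>t<i. jump_prob \<rho> Z (q t) (q (Suc t))"
  obtain s where s: "card (q i) + i = card Z + 2 * s"
    "?X * \<rho> ^ (i - s - 1) * min_dist Z ^ s * gap_potential (q i) \<le> 1 / total_rate \<rho> Z (pi0 Z)"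
    using step.IH step.prems by auto
  have "0 \<le> ?X"
    using jump_prob_bounds(1) part step.prems \<rho> by (auto simp: partitions_def intro!: prod_nonneg)
  moreover have "gaps (q i) \<noteq> {}"
  proof
    assume "gaps (q i) = {}"
    then have "q i = pi0 Z" using gaps_empty_imp_pi0 part step.prems by simp
    then show False using not_pi0 step.hyps step.prems by simp
  qed
  moreover have "q (Suc i) \<in> partitions Z" using part step.prems by (simp add: partitions_def)
  ultimately have "\<exists>s'. card (q (Suc i)) + Suc i = card Z + 2 * s' \<and>
      ?X * jump_prob \<rho> Z (q i) (q (Suc i)) * \<rho> ^ (Suc i - s' - 1) * min_dist Z ^ s'
        * gap_potential (q (Suc i)) \<le> 1 / total_rate \<rho> Z (pi0 Z)"
    using step.hyps step.prems not_pi0[of "Suc i"] theta[of i]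
    by (intro potential_weight_step[OF part \<open>gaps (q i) \<noteq> {}\<close> _ _ _ \<rho> _ s]) auto
  then show ?case by simp
qed

lemma path_prob_potential_bound:
  assumes \<rho>: "0 < \<rho>" and m: "1 \<le> m" and p: "p \<in> paths Z m (pi0 Z) P"
    and P: "partition_on Z P" "P \<noteq> pi0 Z"
  shows "\<exists>s. card P + m = card Z + 2 * s \<and>
    path_prob \<rho> Z p * \<rho> ^ (m - s - 1) * min_dist Z ^ s * gap_potential P
      \<le> 1 / total_rate \<rho> Z (pi0 Z)"
proof -
  have len: "length p = m + 1" and start: "p ! 0 = pi0 Z" and stop: "p ! m = P"
    and inner: "\<And>i. i \<in> {1..<m} \<Longrightarrow> p ! i \<in> partitions Z - {pi0 Z, P}"
    and theta: "\<And>i. i < m \<Longrightarrow> 0 < theta (p ! i) (p ! Suc i)"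
    using p unfolding paths_def by auto
  have part: "partition_on Z (p ! i)" if "i \<le> m" for i
    using inner[of i] that start stop pi0_partition P(1) unfolding partitions_def
    by (cases "i = 0"; cases "i = m") auto
  have not_pi0: "p ! i \<noteq> pi0 Z" if "1 \<le> i" "i \<le> m" for i
    using inner[of i] that stop P(2) by (cases "i = m") auto
  have "p \<noteq> []" using len by auto
  then have "path_prob \<rho> Z p = (\<Prod>t<m. jump_prob \<rho> Z (p ! t) (p ! Suc t))"
    using len start unfolding path_prob_def by (simp add: hd_conv_nth)
  then show ?thesis
    using prefix_weight_bound[of \<rho> "(!) p", OF \<rho> start part not_pi0 theta m order.refl] stop
    by simp
qed

lemma longest_gap:
  assumes P: "partition_on Z Q" and ne: "gaps Q \<noteq> {}"
  obtains B a where "(B, a) \<in> gaps Q" "\<And>x. x \<in> gaps Q \<Longrightarrow> gap_length x \<le> gap_length (B, a)"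
proof -
  have fin: "finite (gap_length ` gaps Q)" using finite_gaps[OF P] by simp
  have "Max (gap_length ` gaps Q) \<in> gap_length ` gaps Q" using Max_in[OF fin] ne by simp
  then obtain x where x: "x \<in> gaps Q" "gap_length x = Max (gap_length ` gaps Q)"
    by (metis imageE)
  show ?thesis
  proof (rule that)
    show "(fst x, snd x) \<in> gaps Q" using x(1) by simp
    fix y assume "y \<in> gaps Q"
    then show "gap_length y \<le> gap_length (fst x, snd x)" using x(2) Max_ge[OF fin] by simp
  qed
qed

lemma merge_chain_partition:
  assumes R: "merge_chain Z R" and j: "j < length R"
  shows "partition_on Z (R ! j) \<and> card (R ! j) + j = card Z"
  using j
proof (induction j)
  case 0
  then show ?case using R pi0_partition card_pi0 unfolding merge_chain_def by simp
next
  case (Suc j)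
  then have "merge_step (R ! j) (R ! Suc j)" using R unfolding merge_chain_def by simp
  then show ?case using Suc merge_step_partition[of "R ! j" "R ! Suc j"] by simp
qed

lemma merge_chain_snoc:
  assumes "merge_chain Z R" "merge_step (last R) Q"
  shows "merge_chain Z (R @ [Q])"
  using assms unfolding merge_chain_def
  by (auto simp: nth_append last_conv_nth less_Suc_eq) (metis diff_Suc_1 One_nat_def)

lemma greedy_merge_chain:
  assumes "partition_on Z Q" "card (gaps Q) = m"
  shows "\<exists>R. merge_chain Z R \<and> length R = m + 1 \<and> R ! m = Q \<and>
    (\<forall>j\<in>{1..m}. total_gap (R ! j) \<le> least_gap_sum Q j)"
  using assms
proof (induction m arbitrary: Q)
  case 0
  then have "Q = pi0 Z" using gaps_empty_imp_pi0 finite_gaps by auto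
  then show ?case by (intro exI[of _ "[Q]"]) (simp add: merge_chain_def)
next
  case (Suc m)
  note P = Suc.prems(1)
  have ne: "gaps Q \<noteq> {}" using Suc.prems(2) by auto
  \<comment> \<open>the last merge of the chain is the one that closes the longest gap\<close>
  obtain B a where G: "(B, a) \<in> gaps Q"
    and longest: "\<And>x. x \<in> gaps Q \<Longrightarrow> gap_length x \<le> gap_length (B, a)"
    using longest_gap[OF P ne] by blast
  define Q' where "Q' = split_block Q B a"
  have P': "partition_on Z Q'" unfolding Q'_def using split_block_partition(1)[OF P G] .
  have "card (gaps Q') = m" unfolding Q'_def using card_gaps_split_block[OF P G] Suc.prems(2) by simp
  from Suc.IH[OF P' this] obtain R' where R': "merge_chain Z R'" "length R' = m + 1" "R' ! m = Q'"
    and below: "\<forall>j\<in>{1..m}. total_gap (R' ! j) \<le> least_gap_sum Q' j"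
    by blast
  have "R' \<noteq> []" using R'(2) by auto
  then have "last R' = Q'" using R'(2,3) by (simp add: last_conv_nth)
  then have "merge_step (last R') Q" using split_block_partition(3)[OF P G] unfolding Q'_def by simp
  then have "merge_chain Z (R' @ [Q])" using merge_chain_snoc[OF R'(1)] by blast
  moreover have "total_gap ((R' @ [Q]) ! j) \<le> least_gap_sum Q j" if j: "j \<in> {1..Suc m}" for j
  proof (cases "j = Suc m")
    case True
    then show ?thesis using R'(2) least_gap_sum_card_gaps[OF P] Suc.prems(2) by (simp add: nth_append)
  next
    case False
    then have "total_gap ((R' @ [Q]) ! j) \<le> least_gap_sum Q' j"
      using below j R'(2) by (simp add: nth_append)
    also have "\<dots> \<le> least_gap_sum Q j"
      unfolding Q'_def using least_gap_sum_split_longest[OF P G longest] Suc.prems(2) j False by simp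
    finally show ?thesis .
  qed
  ultimately show ?case using R'(2) by (intro exI[of _ "R' @ [Q]"]) (simp add: nth_append)
qed

lemma merge_chain_path:
  assumes R: "merge_chain Z R" "length R = k + 1" "R ! k = P"
  shows "R \<in> paths Z k (pi0 Z) P"
    and "path_prob \<rho> Z R = (\<Prod>j<k. 1 / total_rate \<rho> Z (R ! j))"
proof -
  note part = merge_chain_partition[OF R(1)]
  have steps: "merge_step (R ! j) (R ! Suc j)" if "j < k" for j
    using R that unfolding merge_chain_def by simp
  have "R ! i \<in> partitions Z - {pi0 Z, P}" if i: "i \<in> {1..<k}" for i
  proof -
    have "partition_on Z (R ! i)" "card (R ! i) + i = card Z" "card P + k = card Z"
      using part[of i] part[of k] R i by auto
    then show ?thesis using card_pi0[of Z] i unfolding partitions_def by auto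
  qed
  moreover have "0 < theta (R ! i) (R ! (i + 1))" if "i < k" for i
    using theta_merge_step_pos part[of i] steps[of i] R(2) that by simp
  ultimately show "R \<in> paths Z k (pi0 Z) P" unfolding paths_def using R merge_chain_def by auto
  have "path_prob \<rho> Z R = (\<Prod>j<k. jump_prob \<rho> Z (R ! j) (R ! Suc j))"
    using R unfolding path_prob_def merge_chain_def by (simp add: hd_conv_nth)
  also have "\<dots> = (\<Prod>j<k. 1 / total_rate \<rho> Z (R ! j))"
    using jump_prob_merge_step part steps R(2) by (intro prod.cong) auto
  finally show "path_prob \<rho> Z R = (\<Prod>j<k. 1 / total_rate \<rho> Z (R ! j))" .
qed

lemma merge_path_prob_ge:
  assumes P: "partition_on Z P" and k: "card (gaps P) = k" "1 \<le> k" and \<rho>: "0 < \<rho>"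
  defines "\<beta> \<equiv> 1 + gamma Z 1 / (\<rho> * min_dist Z)"
  shows "\<exists>R\<in>paths Z k (pi0 Z) P.
    1 / (real (card Z choose 2) * (\<beta> * \<rho>) ^ (k - 1) * gap_potential P) \<le> path_prob \<rho> Z R"
proof -
  obtain R where R: "merge_chain Z R" "length R = k + 1" "R ! k = P"
     and below: "\<forall>j\<in>{1..k}. total_gap (R ! j) \<le> least_gap_sum P j"
    using greedy_merge_chain[OF P k(1)] by blast
  have factor: "1 / (\<beta> * \<rho> * least_gap_sum P j) \<le> 1 / total_rate \<rho> Z (R ! j)"
    if j: "j \<in> {1..<k}" for j
  proof -
    have Pj: "partition_on Z (R ! j)" and "card (R ! j) + j = card Z"
      using merge_chain_partition[OF R(1), of j] R(2) j by auto
    then have "gaps (R ! j) \<noteq> {}" using card_gaps_add_card[OF Pj] j by auto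
    then show ?thesis
      unfolding \<beta>_def using inverse_total_rate_ge[OF Pj _ \<rho>] below j by simp
  qed
  have "gaps P \<noteq> {}" using k by auto
  then have "\<beta> \<ge> 0" unfolding \<beta>_def using min_dist_pos[OF P] \<rho> gamma_nonneg
    by (simp add: add_nonneg_nonneg)
  have "1 / (real (card Z choose 2) * (\<beta> * \<rho>) ^ (k - 1) * gap_potential P)
      = 1 / real (card Z choose 2) * (\<Prod>j\<in>{1..<k}. 1 / (\<beta> * \<rho> * least_gap_sum P j))"
    unfolding gap_potential_def k(1) by (simp add: prod_dividef prod.distrib)
  also have "\<dots> \<le> 1 / real (card Z choose 2) * (\<Prod>j\<in>{1..<k}. 1 / total_rate \<rho> Z (R ! j))"
  proof (intro mult_left_mono prod_mono conjI)
    fix j assume "j \<in> {1..<k}"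
    then show "0 \<le> 1 / (\<beta> * \<rho> * least_gap_sum P j)"
      using least_gap_sum_pos[OF P, of j] k \<open>\<beta> \<ge> 0\<close> \<rho> by simp
  qed (use factor in auto)
  also have "\<dots> = path_prob \<rho> Z R"
    unfolding merge_chain_path(2)[OF R] lessThan_atLeast0
    using k(2) R(1) total_rate_pi0 by (simp add: prod.atLeast_Suc_lessThan merge_chain_def)
  finally show ?thesis using merge_chain_path(1)[OF R] by blast
qed

end

theorem lemma4:
  fixes Z :: "real set" and n k N :: nat and \<rho> :: real
    and \<pi> :: "real set set" and p :: "real set set list"
  assumes "finite Z" and "card Z = n + 1"
    and "\<rho> > 0"
    and "1 \<le> k" and "k \<le> n"
    and "\<pi> \<in> partitions_order Z k"
    and "N > 0"
    and "p \<in> paths Z (k + 2 * N) (pi0 Z) \<pi>"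
  shows "\<exists>p' \<in> paths Z k (pi0 Z) \<pi>.
           path_prob \<rho> Z p / path_prob \<rho> Z p'
             \<le> ((1 + gamma Z 1 / (\<rho> * min_dist Z)) ^ k / (min_dist Z * \<rho>)) ^ N"
proof -
  interpret finite_ground Z by unfold_locales (rule assms(1))
  define \<alpha> where "\<alpha> = min_dist Z"
  define \<beta> where "\<beta> = 1 + gamma Z 1 / (\<rho> * \<alpha>)"
  have P: "partition_on Z \<pi>" and card_\<pi>: "card \<pi> + k = card Z"
    using assms(2,5,6) unfolding partitions_order_def partitions_def by auto
  have gaps_\<pi>: "card (gaps \<pi>) = k" using card_gaps_add_card[OF P] card_\<pi> by simp
  then have \<alpha>: "0 < \<alpha>" using min_dist_pos[OF P] assms(4) unfolding \<alpha>_def by fastforce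
  have "\<pi> \<noteq> pi0 Z" using card_\<pi> card_pi0[of Z] assms(4) by auto
  then obtain s where s: "card \<pi> + (k + 2 * N) = card Z + 2 * s"
    and upper: "path_prob \<rho> Z p * \<rho> ^ (k + 2 * N - s - 1) * \<alpha> ^ s * gap_potential \<pi>
      \<le> 1 / real (card Z choose 2)"
    using path_prob_potential_bound[OF assms(3) _ assms(8) P] assms(4)
    unfolding \<alpha>_def total_rate_pi0 by auto
  have "s = N" and "k + 2 * N - N - 1 = k + N - 1" using s card_\<pi> by auto
  obtain R where R: "R \<in> paths Z k (pi0 Z) \<pi>" and lower:
    "1 / (real (card Z choose 2) * (\<beta> * \<rho>) ^ (k - 1) * gap_potential \<pi>) \<le> path_prob \<rho> Z R"
    using merge_path_prob_ge[OF P gaps_\<pi> assms(4,3)] unfolding \<beta>_def \<alpha>_def by blast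
  have "0 < real (card Z choose 2)" and \<beta>: "1 \<le> \<beta>"
    using assms(2-5) \<alpha> gamma_nonneg[of Z 1] unfolding \<beta>_def by auto
  from ratio_bound[OF this(1) assms(3) \<alpha> gap_potential_pos[OF P] \<beta> assms(4) _ _ lower] upper assms(7)
  have "path_prob \<rho> Z p / path_prob \<rho> Z R \<le> (\<beta> ^ k / (\<alpha> * \<rho>)) ^ N"
    using \<open>s = N\<close> \<open>k + 2 * N - N - 1 = k + N - 1\<close> by simp
  then show ?thesis using R unfolding \<alpha>_def \<beta>_def by blast
qed

end
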